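(* Let $0<\epsilon<1$ be fixed. Suppose that Assumption 2 holds and that at least one of Assumption 1.1 and Assumption 1.2 holds. Suppose moreover that for every $C\subseteq V$ with $|C|=r$, \[ \max_{\emptyset\ne D\subseteq C}\frac{\mathbb{E}_0[e(D)]\,h(\rho_C-1)}{|D|\log(n/|D|)}\le1-\epsilon . \] Then the following hold as $n\to\infty$: (a) for all $C\subseteq V$ with $|C|=r$ and all $D\in\mathcal E_C$, \[ \frac{\log(r/|D|)}{\log(n/r)}\big(\log(\rho_C)\vee1\big)=o(1); \] (b) $\log(n/r)/\log(\rho_C)\to\infty$ for all $C\subseteq V$ with $|C|=r$.
   Context: Setting. For each $n$ let $V=\{1,\dots,n\}$, let $p_{ij}=p_{ji}\in[0,1]$ ($i\ne j$) be edge probabilities, let $r=r_n$ be a community size, and for every $C\subseteq V$ with $|C|=r$ let $\rho_C>1$ with $\rho_Cp_{ij}\le1$ for $i,j\in C$. All may depend on $n$, and limits are as $n\to\infty$. Under $\mathbb{P}_0$ the adjacency entries $A_{ij}$ ($i<j$) of a random simple graph on $V$ are independent $\mathrm{Bern}(p_{ij})$, with expectation $\mathbb{E}_0$. Notation. $e(D)=\sum_{i<j,\ i,j\in D}A_{ij}$. $h(x)=(x+1)\log(x+1)-x$. For $|D|\ge2$, $\bar p_D=\mathbb{E}_0[e(D)]/\binom{|D|}2$. With $b_n=\log\log(n/r)$, for $C$ with $|C|=r$ define \[ \mathcal E_C=\Big\{D\subseteq C:\ (\rho_C-1)^2\,\mathbb{E}_0[e(D)]>(1-\epsilon/2)\,|D|\Big(\log\frac{n|D|}{r^2}-b_n\Big)\Big\}.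 \] Assumption 1.1. There exists $\delta\in(0,1/2)$ with: (i) $r=O(n^{1/2-\delta})$; (ii) there exists $0<\gamma_n=o(1)$ such that $\max_{|C|=r}\max_{D\subseteq C,\,|D|<r/(n/r)^{\gamma_n}}\frac{|D|\bar p_D}{|C|\bar p_C}\le\delta$; (iii) $\max_{|C|=r}1/\bar p_C=o(r/\log(n/r))$. Assumption 1.2. (i) $r=n^{o(1)}$; (ii) $\max_{|C|=r}\log(1/\bar p_C)=o(\log(n/r)/\log r)$. Assumption 2. $\max_{|C|=r}\max_{i,j\in C}\rho_C^2p_{ij}\to0$. *)

theory Defs
  imports Complex_Main "HOL-Library.Landau_Symbols"
begin

(* Model: p n i j = p_ij for the n-th graph, r n = r_n, rho n C = rho_C.
   Vertex set V = {1..n}. All logarithms are natural logarithms. *)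

definition Ee :: "(nat \<Rightarrow> nat \<Rightarrow> nat \<Rightarrow> real) \<Rightarrow> nat \<Rightarrow> nat set \<Rightarrow> real" where
  "Ee p n D = (\<Sum>(i,j)\<in>{(i,j). i \<in> D \<and> j \<in> D \<and> i < j}. p n i j)"

definition pbar :: "(nat \<Rightarrow> nat \<Rightarrow> nat \<Rightarrow> real) \<Rightarrow> nat \<Rightarrow> nat set \<Rightarrow> real" where
  "pbar p n D = Ee p n D / real (card D choose 2)"

definition hfun :: "real \<Rightarrow> real" where
  "hfun x = (x + 1) * ln (x + 1) - x"

definition bn :: "(nat \<Rightarrow> nat) \<Rightarrow> nat \<Rightarrow> real" where
  "bn r n = ln (ln (real n / real (r n)))"

definition ECset :: "real \<Rightarrow> (nat \<Rightarrow> nat \<Rightarrow> nat \<Rightarrow> real) \<Rightarrow> (nat \<Rightarrow> nat)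
      \<Rightarrow> (nat \<Rightarrow> nat set \<Rightarrow> real) \<Rightarrow> nat \<Rightarrow> nat set \<Rightarrow> nat set set" where
  "ECset \<epsilon> p r rho n C = {D. D \<subseteq> C \<and>
      (rho n C - 1)^2 * Ee p n D >
      (1 - \<epsilon>/2) * real (card D) *
        (ln (real n * real (card D) / (real (r n))^2) - bn r n)}"

definition setting :: "(nat \<Rightarrow> nat \<Rightarrow> nat \<Rightarrow> real) \<Rightarrow> (nat \<Rightarrow> nat)
      \<Rightarrow> (nat \<Rightarrow> nat set \<Rightarrow> real) \<Rightarrow> nat \<Rightarrow> bool" where
  "setting p r rho n \<longleftrightarrow>
     (\<forall>i\<in>{1..n}. \<forall>j\<in>{1..n}. i \<noteq> j \<longrightarrow>
         p n i j = p n j i \<and> 0 \<le> p n i j \<and> p n i j \<le> 1) \<and>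
     (\<forall>C. C \<subseteq> {1..n} \<and> card C = r n \<longrightarrow>
         rho n C > 1 \<and> (\<forall>i\<in>C. \<forall>j\<in>C. i \<noteq> j \<longrightarrow> rho n C * p n i j \<le> 1))"

definition assumption11 :: "(nat \<Rightarrow> nat \<Rightarrow> nat \<Rightarrow> real) \<Rightarrow> (nat \<Rightarrow> nat) \<Rightarrow> bool" where
  "assumption11 p r \<longleftrightarrow> (\<exists>\<delta>::real. 0 < \<delta> \<and> \<delta> < 1/2 \<and>
     \<comment> \<open>(i)\<close>
     (\<lambda>n. real (r n)) \<in> O(\<lambda>n. real n powr (1/2 - \<delta>)) \<and>
     \<comment> \<open>(ii)\<close>
     (\<exists>\<gamma>::nat \<Rightarrow> real. (\<forall>n. 0 < \<gamma> n) \<and> \<gamma> \<longlonglongrightarrow> 0 \<and>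
        (\<forall>n. \<forall>C D. C \<subseteq> {1..n} \<and> card C = r n \<and> D \<subseteq> C \<and>
            real (card D) < real (r n) / (real n / real (r n)) powr (\<gamma> n) \<longrightarrow>
            real (card D) * pbar p n D / (real (card C) * pbar p n C) \<le> \<delta>)) \<and>
     \<comment> \<open>(iii): max_C 1/pbar_C = o(r / log(n/r)), with pbar_C > 0 (so 1/pbar_C is finite)\<close>
     (\<forall>c>0. eventually (\<lambda>n. \<forall>C. C \<subseteq> {1..n} \<and> card C = r n \<longrightarrow>
          pbar p n C > 0 \<and>
          (1 / pbar p n C) * ln (real n / real (r n)) \<le> c * real (r n)) sequentially))"

definition assumption12 :: "(nat \<Rightarrow> nat \<Rightarrow> nat \<Rightarrow> real) \<Rightarrow> (nat \<Rightarrow> nat) \<Rightarrow> bool" where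
  "assumption12 p r \<longleftrightarrow>
     \<comment> \<open>(i) r = n^{o(1)}\<close>
     (\<forall>c>0. eventually (\<lambda>n. real (r n) \<le> real n powr c) sequentially) \<and>
     \<comment> \<open>(ii) max_C log(1/pbar_C) = o(log(n/r)/log r), with pbar_C > 0\<close>
     (\<forall>c>0. eventually (\<lambda>n. \<forall>C. C \<subseteq> {1..n} \<and> card C = r n \<longrightarrow>
          pbar p n C > 0 \<and>
          ln (1 / pbar p n C) * ln (real (r n)) \<le> c * ln (real n / real (r n))) sequentially)"

definition assumption2 :: "(nat \<Rightarrow> nat \<Rightarrow> nat \<Rightarrow> real) \<Rightarrow> (nat \<Rightarrow> nat)
      \<Rightarrow> (nat \<Rightarrow> nat set \<Rightarrow> real) \<Rightarrow> bool" where
  "assumption2 p r rho \<longleftrightarrow>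
     (\<forall>c>0. eventually (\<lambda>n. \<forall>C. C \<subseteq> {1..n} \<and> card C = r n \<longrightarrow>
          (\<forall>i\<in>C. \<forall>j\<in>C. i \<noteq> j \<longrightarrow> (rho n C)^2 * p n i j \<le> c)) sequentially)"

end

theory Submission
  imports Defs "HOL-Real_Asymp.Real_Asymp"
begin

(* Write L = log(n/r).  The subthreshold hypothesis for D = C, together with
   E_0[e(C)] = pbar_C r(r-1)/2, gives h(rho_C - 1) pbar_C r <= 4L.

   Under Assumption 1.1 the bound 4L/(pbar_C r) is o(1), so rho_C -> 1 uniformly, and
   r = O(n^(1/2 - delta)) gives log(n/r^2) >= (2 - o(1)) delta log n.  If a member D of E_C
   were smaller than r/(n/r)^gamma, then by 1.1(ii) it would carry at most a delta-fraction
   of the edge mass of C, and the bound for C would give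
   (rho_C - 1)^2 E_0[e(D)] <= (2 + o(1)) (1 - epsilon) delta |D| L, contradicting the lower
   bound (1 - epsilon/2) |D| (log(n|D|/r^2) - log L) that defines E_C.
   Hence log(r/|D|) <= gamma L.

   Under Assumption 1.2, h(x) >= x + 1 once x + 1 >= e^2, so rho_C <= max(e^2, 4L/(pbar_C r))
   and log r * log rho_C <= log r (log 4L - log r) + log(1/pbar_C) log r
                         <= (log 4L)^2/4 + o(L).

   Either way log rho_C and log(r/|D|) (log rho_C v 1) are o(L) uniformly in C, which gives
   (a) and (b). *)

lemma real_choose_two: "real (k choose 2) = real k * (real k - 1) / 2"
proof -
  have "even (k * (k - 1))" by (cases "even k") auto
  then show ?thesis
    by (cases k) (simp_all add: choose_two real_of_nat_div of_nat_diff algebra_simps)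
qed

lemma ln_one_plus_ge:
  fixes t :: real
  assumes "0 \<le> t"
  shows "2 * t / (2 + t) \<le> ln (1 + t)"
proof -
  define f where "f x = ln (1 + x) - 2 * x / (2 + x)" for x :: real
  have "f 0 \<le> f t"
  proof (rule DERIV_nonneg_imp_nondecreasing[OF assms])
    fix x :: real
    assume "0 \<le> x"
    then have "(f has_real_derivative (1 / (1 + x) - 4 / (2 + x)^2)) (at x)"
      unfolding f_def by (auto intro!: derivative_eq_intros simp: field_simps power2_eq_square)
    moreover have "4 * (1 + x) \<le> (2 + x)^2" by (simp add: power2_eq_square algebra_simps)
    then have "0 \<le> 1 / (1 + x) - 4 / (2 + x)^2"
      using \<open>0 \<le> x\<close> by (simp add: field_simps)
    ultimately show "\<exists>y. (f has_real_derivative y) (at x) \<and> 0 \<le> y" by blast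
  qed
  then show ?thesis by (simp add: f_def)
qed

lemma hfun_ge_square:
  fixes t :: real
  assumes "0 \<le> t"
  shows "t^2 \<le> (2 + t) * hfun t"
proof -
  have "2 * t \<le> (2 + t) * ln (1 + t)"
    using ln_one_plus_ge[OF assms] assms by (simp add: field_simps)
  then have "2 * t * (1 + t) \<le> (2 + t) * ln (1 + t) * (1 + t)"
    using assms by (intro mult_right_mono) auto
  then show ?thesis unfolding hfun_def by (simp add: algebra_simps power2_eq_square)
qed

lemma hfun_pos:
  fixes t :: real
  assumes "0 < t"
  shows "0 < hfun t"
proof -
  have "0 < t^2" using assms by simp
  also have "\<dots> \<le> (2 + t) * hfun t" using hfun_ge_square assms by simp
  finally have "0 < (2 + t) * hfun t" .
  then show ?thesis using assms by (simp add: zero_less_mult_iff)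
qed

lemma less_if_hfun_le:
  fixes s t :: real
  assumes "0 \<le> t" "0 < s" "s < 1" "hfun t \<le> s^2 / 3"
  shows "t < s"
proof (rule ccontr)
  assume "\<not> t < s"
  then have "s \<le> t" by simp
  have "t * s \<le> t^2"
    using \<open>s \<le> t\<close> assms by (simp add: power2_eq_square mult_left_mono)
  also have "\<dots> \<le> (2 + t) * (s^2 / 3)"
    using hfun_ge_square[OF assms(1)] mult_left_mono[OF assms(4), of "2 + t"] assms(1) by linarith
  also have "\<dots> < t * s"
  proof -
    have "s * t < 1 * t"
      using \<open>s \<le> t\<close> assms by (intro mult_strict_right_mono) auto
    then have "(2 + t) * s < 3 * t"
      using \<open>s \<le> t\<close> by (simp add: algebra_simps)
    then have "(2 + t) * s * s < 3 * t * s"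
      using assms(2) by (rule mult_strict_right_mono)
    then show ?thesis by (simp add: power2_eq_square field_simps)
  qed
  finally show False by simp
qed

lemma plus_one_le_hfun:
  fixes x :: real
  assumes "exp 2 \<le> x + 1"
  shows "x + 1 \<le> hfun x"
proof -
  have pos: "0 < x + 1" using assms exp_gt_zero[of 2] by linarith
  then have "2 \<le> ln (x + 1)" using assms by (simp add: ln_ge_iff)
  then have "(x + 1) * 2 \<le> (x + 1) * ln (x + 1)" using pos by (intro mult_left_mono) auto
  then show ?thesis unfolding hfun_def by (simp add: algebra_simps)
qed

lemma ln_le_of_le_powr:
  fixes x y b :: real
  assumes "0 < x" "x \<le> y powr b"
  shows "ln x \<le> b * ln y"
  using ln_mono[OF assms(2,1)] by simp

lemma ln_bounds_of_le_powr:
  fixes x y b :: real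
  assumes "1 \<le> x" "1 \<le> y" "x \<le> y powr b" "b \<le> 1/2"
  shows "ln x \<le> b * ln y" "ln y \<le> 2 * ln (y / x)" "ln (y / x) \<le> ln y"
proof -
  show lnx: "ln x \<le> b * ln y" using ln_le_of_le_powr assms(1,3) by simp
  have "0 \<le> ln x" "0 \<le> ln y" using assms(1,2) by simp_all
  moreover have "ln (y / x) = ln y - ln x" using assms(1,2) by (simp add: ln_div)
  moreover have "b * ln y \<le> 1/2 * ln y" using assms(4) \<open>0 \<le> ln y\<close> by (rule mult_right_mono)
  ultimately show "ln y \<le> 2 * ln (y / x)" "ln (y / x) \<le> ln y" using lnx by linarith+
qed

lemma ln_div_le_of_div_powr_le:
  fixes c d x g :: real
  assumes "0 < c" "0 < d" "0 < x" "c / x powr g \<le> d"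
  shows "ln (c / d) \<le> g * ln x"
proof (rule ln_le_of_le_powr)
  show "0 < c / d" using assms by simp
  show "c / d \<le> x powr g" using assms by (simp add: field_simps)
qed

lemma eventually_le_powr_of_bigo:
  fixes f :: "nat \<Rightarrow> real"
  assumes "f \<in> O(\<lambda>n. real n powr a)" "a < b"
  shows "eventually (\<lambda>n. f n \<le> real n powr b) sequentially"
proof -
  have "(\<lambda>n. real n powr a) \<in> o(\<lambda>n. real n powr b)"
    using assms(2) by (subst powr_smallo_iff) (auto intro: filterlim_real_sequentially)
  with assms(1) have "f \<in> o(\<lambda>n. real n powr b)" by (rule landau_o.big_small_trans)
  then have "eventually (\<lambda>n. norm (f n) \<le> 1 * norm (real n powr b)) sequentially"
    by (rule landau_o.smallD) simp
  then show ?thesis by eventually_elim simp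
qed

lemma Ee_eq_pbar:
  assumes "finite D"
  shows "Ee p n D = pbar p n D * (real (card D) * (real (card D) - 1) / 2)"
proof (cases "card D < 2")
  case True
  then have "\<forall>i\<in>D. \<forall>j\<in>D. i = j" using assms card_le_Suc0_iff_eq by fastforce
  then have "{(i, j). i \<in> D \<and> j \<in> D \<and> i < j} = {}" by auto
  then have "Ee p n D = 0" unfolding Ee_def by (simp only: sum.empty)
  moreover have "real (card D) * (real (card D) - 1) = 0"
    using True by (cases "card D") auto
  ultimately show ?thesis by simp
next
  case False
  then show ?thesis by (simp add: pbar_def real_choose_two)
qed

lemma card_ge_2_if_pbar_pos:
  assumes "0 < pbar p n C"
  shows "2 \<le> card C"
proof (rule ccontr)
  assume "\<not> 2 \<le> card C"
  then have "card C choose 2 = 0" by simp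
  \<comment> \<open>so pbar is a division by zero\<close>
  then have "pbar p n C = 0" by (simp only: pbar_def of_nat_0 div_by_0)
  then show False using assms by simp
qed

lemma Ee_le_of_mass_le:
  assumes "finite C" "D \<subseteq> C" "D \<noteq> {}" "0 \<le> \<delta>" "0 \<le> pbar p n C"
    and mass: "real (card D) * pbar p n D \<le> \<delta> * real (card C) * pbar p n C"
  shows "Ee p n D \<le> \<delta> * real (card D) / real (card C) * Ee p n C"
proof -
  define d c where "d = real (card D)" and "c = real (card C)"
  have "finite D" using assms(1,2) finite_subset by blast
  then have d1: "1 \<le> d" using assms(3) by (simp add: d_def Suc_le_eq card_gt_0_iff)
  have dc: "d \<le> c" unfolding d_def c_def using card_mono[OF assms(1,2)] by simp
  have "Ee p n D = d * pbar p n D * ((d - 1) / 2)"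
    using Ee_eq_pbar[OF \<open>finite D\<close>] by (simp add: d_def)
  also have "\<dots> \<le> \<delta> * c * pbar p n C * ((d - 1) / 2)"
    using mass d1 by (intro mult_right_mono) (auto simp: d_def c_def)
  also have "\<dots> = \<delta> * pbar p n C / 2 * (c * (d - 1))" by simp
  also have "\<dots> \<le> \<delta> * pbar p n C / 2 * (d * (c - 1))"
    using assms(4,5) dc by (intro mult_left_mono) (auto simp: algebra_simps)
  also have "\<dots> = \<delta> * d / c * Ee p n C"
    unfolding Ee_eq_pbar[OF assms(1), of p n] c_def[symmetric] using d1 dc
    by (simp add: field_simps)
  finally show ?thesis by (simp add: d_def c_def)
qed

locale subthreshold_model =
  fixes \<epsilon> :: real
    and p :: "nat \<Rightarrow> nat \<Rightarrow> nat \<Rightarrow> real"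
    and r :: "nat \<Rightarrow> nat"
    and rho :: "nat \<Rightarrow> nat set \<Rightarrow> real"
  assumes eps_pos: "0 < \<epsilon>" and eps_less_1: "\<epsilon> < 1"
    and model_setting: "setting p r rho n"
    and subthreshold: "C \<subseteq> {1..n} \<Longrightarrow> card C = r n \<Longrightarrow> D \<subseteq> C \<Longrightarrow> D \<noteq> {} \<Longrightarrow>
      Ee p n D * hfun (rho n C - 1) \<le> (1 - \<epsilon>) * (real (card D) * ln (real n / real (card D)))"
begin

abbreviation community :: "nat \<Rightarrow> nat set \<Rightarrow> bool" where
  "community n C \<equiv> C \<subseteq> {1..n} \<and> card C = r n"

abbreviation log_ratio :: "nat \<Rightarrow> real" where
  "log_ratio n \<equiv> ln (real n / real (r n))"

definition log_bounds :: "real \<Rightarrow> nat \<Rightarrow> bool" where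
  "log_bounds \<eta> n \<longleftrightarrow> (\<forall>C. community n C \<longrightarrow>
     ln (rho n C) \<le> \<eta> * log_ratio n \<and>
     (\<forall>D\<in>ECset \<epsilon> p r rho n C.
        ln (real (r n) / real (card D)) * max (ln (rho n C)) 1 \<le> \<eta> * log_ratio n))"

lemma rho_gt_1: "community n C \<Longrightarrow> 1 < rho n C"
  using model_setting unfolding setting_def by blast

lemma community_card_bounds:
  assumes C: "community n C" and pb: "0 < pbar p n C"
  shows "2 \<le> r n" "r n \<le> n"
proof -
  show "2 \<le> r n" using card_ge_2_if_pbar_pos[OF pb] C by simp
  show "r n \<le> n" using card_mono[of "{1..n}" C] C by simp
qed

lemma hfun_rho_le:
  assumes C: "community n C" and pb: "0 < pbar p n C"
  shows "hfun (rho n C - 1) * (pbar p n C * real (r n)) \<le> 4 * log_ratio n"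
proof -
  define h where "h = hfun (rho n C - 1)"
  have h0: "0 \<le> h" unfolding h_def using hfun_pos rho_gt_1[OF C] by (simp add: less_imp_le)
  have r2: "2 \<le> real (r n)" using community_card_bounds(1)[OF C pb] by simp
  then have "C \<noteq> {}" using C by auto
  have EeC: "Ee p n C = pbar p n C * (real (r n) * (real (r n) - 1) / 2)"
    using Ee_eq_pbar[of C] C finite_subset by fastforce
  have lower: "0 \<le> h * (pbar p n C * real (r n)^2 / 4)" using h0 pb by simp
  have "h * (pbar p n C * real (r n)^2 / 4) \<le> h * Ee p n C"
    unfolding EeC using h0 pb r2 by (intro mult_left_mono) (auto simp: power2_eq_square field_simps)
  also have "\<dots> \<le> (1 - \<epsilon>) * (real (r n) * log_ratio n)"
    using subthreshold[of C n C] C \<open>C \<noteq> {}\<close> unfolding h_def by (simp add: mult.commute)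
  finally have bound: "h * (pbar p n C * real (r n)^2 / 4) \<le> (1 - \<epsilon>) * (real (r n) * log_ratio n)" .
  with lower have "0 \<le> (1 - \<epsilon>) * (real (r n) * log_ratio n)" by linarith
  then have "0 \<le> real (r n) * log_ratio n"
    using eps_less_1 by (simp add: zero_le_mult_iff)
  then have "(1 - \<epsilon>) * (real (r n) * log_ratio n) \<le> real (r n) * log_ratio n"
    using eps_pos by (simp add: algebra_simps)
  with bound have "h * (pbar p n C * real (r n)^2 / 4) \<le> real (r n) * log_ratio n"
    by linarith
  then show ?thesis using r2 unfolding h_def by (simp add: power2_eq_square field_simps)
qed

lemma log_ratio_pos:
  assumes "community n C" "0 < pbar p n C"
  shows "0 < log_ratio n"
proof -
  have "0 < hfun (rho n C - 1) * (pbar p n C * real (r n))"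
    using hfun_pos rho_gt_1[OF assms(1)] community_card_bounds(1)[OF assms] assms(2) by simp
  then show ?thesis using hfun_rho_le[OF assms] by simp
qed

lemma ln_rho_le:
  assumes C: "community n C" and pb: "0 < pbar p n C"
  shows "ln (rho n C) \<le> max 2 (ln (4 * log_ratio n) + ln (1 / pbar p n C) - ln (real (r n)))"
proof (cases "ln (rho n C) \<le> 2")
  case False
  have rho0: "0 < rho n C" using rho_gt_1[OF C] by simp
  have r0: "0 < real (r n)" using community_card_bounds(1)[OF C pb] by simp
  have "exp 2 \<le> rho n C" using False ln_ge_iff[OF rho0, of 2] by simp
  then have "rho n C \<le> hfun (rho n C - 1)" using plus_one_le_hfun[of "rho n C - 1"] by simp
  then have "rho n C * (pbar p n C * real (r n)) \<le> hfun (rho n C - 1) * (pbar p n C * real (r n))"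
    using pb r0 by (intro mult_right_mono) auto
  also have "\<dots> \<le> 4 * log_ratio n" using hfun_rho_le[OF C pb] .
  finally have "rho n C * (pbar p n C * real (r n)) \<le> 4 * log_ratio n" .
  then have "rho n C \<le> 4 * log_ratio n / (pbar p n C * real (r n))"
    using pb r0 by (simp add: pos_le_divide_eq)
  then have "ln (rho n C) \<le> ln (4 * log_ratio n / (pbar p n C * real (r n)))"
    using rho0 by simp
  also have "\<dots> = ln (4 * log_ratio n) + ln (1 / pbar p n C) - ln (real (r n))"
    using log_ratio_pos[OF C pb] pb r0 by (simp add: ln_div ln_mult)
  finally show ?thesis by simp
qed simp

lemma ECset_card_bounds:
  assumes C: "community n C" and D: "D \<in> ECset \<epsilon> p r rho n C"
  shows "D \<subseteq> C" "1 \<le> card D" "card D \<le> r n"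
proof -
  show DC: "D \<subseteq> C" using D by (simp add: ECset_def)
  have "finite C" using C finite_subset by blast
  then show "card D \<le> r n" using card_mono[OF _ DC] C by simp
  have "D \<noteq> {}" using D by (auto simp: ECset_def Ee_def)
  then show "1 \<le> card D"
    using \<open>finite C\<close> DC finite_subset by (fastforce simp: Suc_le_eq card_gt_0_iff)
qed

lemma ECset_mass_bound:
  assumes C: "community n C" and pb: "0 < pbar p n C" and D: "D \<in> ECset \<epsilon> p r rho n C"
    and "0 \<le> \<delta>" and mass: "real (card D) * pbar p n D \<le> \<delta> * real (r n) * pbar p n C"
  shows "(1 - \<epsilon> / 2) * (ln (real n * real (card D) / real (r n)^2) - bn r n)
           < (1 + rho n C) * \<delta> * (1 - \<epsilon>) * log_ratio n"
proof -
  define t d where "t = rho n C - 1" and "d = real (card D)"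
  have t0: "0 \<le> t" using rho_gt_1[OF C] by (simp add: t_def)
  have DC: "D \<subseteq> C" and d1: "1 \<le> d" and dr: "d \<le> real (r n)"
    using ECset_card_bounds[OF C D] by (auto simp: d_def)
  have "finite C" using C finite_subset by blast
  have "0 \<le> real (r n) * (real (r n) - 1) / 2" using d1 dr by simp
  then have "0 \<le> Ee p n C" unfolding Ee_eq_pbar[OF \<open>finite C\<close>, of p n] using pb C by simp
  have "C \<noteq> {}" using C d1 dr by auto
  then have hC: "Ee p n C * hfun t \<le> (1 - \<epsilon>) * (real (r n) * log_ratio n)"
    using subthreshold[of C n C] C unfolding t_def by auto
  have "D \<noteq> {}" using d1 by (auto simp: d_def)
  have "Ee p n D \<le> \<delta> * d / real (r n) * Ee p n C"
    using Ee_le_of_mass_le[OF \<open>finite C\<close> DC \<open>D \<noteq> {}\<close> \<open>0 \<le> \<delta>\<close>, of p n] mass pb C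
    by (simp add: d_def)
  then have "t^2 * Ee p n D \<le> t^2 * (\<delta> * d / real (r n) * Ee p n C)"
    by (rule mult_left_mono) simp
  also have "\<dots> = \<delta> * d / real (r n) * (t^2 * Ee p n C)" by simp
  also have "\<dots> \<le> \<delta> * d / real (r n) * ((2 + t) * (Ee p n C * hfun t))"
    using mult_right_mono[OF hfun_ge_square[OF t0] \<open>0 \<le> Ee p n C\<close>] \<open>0 \<le> \<delta>\<close> d1 dr
    by (intro mult_left_mono) (auto simp: mult_ac)
  also have "\<dots> \<le> \<delta> * d / real (r n) * ((2 + t) * ((1 - \<epsilon>) * (real (r n) * log_ratio n)))"
    using hC t0 \<open>0 \<le> \<delta>\<close> d1 by (intro mult_left_mono) auto
  also have "\<dots> = d * ((1 + rho n C) * \<delta> * (1 - \<epsilon>) * log_ratio n)"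
    using d1 dr by (simp add: t_def field_simps)
  finally have upper: "t^2 * Ee p n D \<le> d * ((1 + rho n C) * \<delta> * (1 - \<epsilon>) * log_ratio n)" .
  have "d * ((1 - \<epsilon> / 2) * (ln (real n * d / real (r n)^2) - bn r n)) < t^2 * Ee p n D"
    using D by (simp add: ECset_def t_def d_def mult_ac)
  with upper have "d * ((1 - \<epsilon> / 2) * (ln (real n * d / real (r n)^2) - bn r n))
      < d * ((1 + rho n C) * \<delta> * (1 - \<epsilon>) * log_ratio n)" by linarith
  with d1 show ?thesis by (simp add: d_def mult_less_cancel_left_pos)
qed

lemma ECset_mass_fraction_gt:
  assumes C: "community n C" and pb: "0 < pbar p n C" and D: "D \<in> ECset \<epsilon> p r rho n C"
    and "0 < \<delta>" and rho: "rho n C - 1 \<le> \<epsilon> / 2"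
    and r_le: "ln (real (r n)) \<le> (1/2 - \<delta> + \<delta> * \<epsilon> / 8) * ln (real n)"
    and lnln: "ln (ln (real n)) \<le> \<delta> * \<epsilon> / 4 * ln (real n)"
  shows "\<delta> * real (r n) * pbar p n C < real (card D) * pbar p n D"
proof (rule ccontr)
  assume "\<not> ?thesis"
  then have upper: "(1 - \<epsilon> / 2) * (ln (real n * real (card D) / real (r n)^2) - bn r n)
      < (1 + rho n C) * \<delta> * (1 - \<epsilon>) * log_ratio n"
    using ECset_mass_bound[OF C pb D] \<open>0 < \<delta>\<close> by simp
  define l where "l = ln (real n)"
  have r: "1 \<le> real (r n)" "1 \<le> real n" using community_card_bounds[OF C pb] by auto
  have d1: "1 \<le> real (card D)" using ECset_card_bounds(2)[OF C D] by simp
  have l0: "0 \<le> l" using r(2) by (simp add: l_def)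
  have L: "0 < log_ratio n" "log_ratio n \<le> l"
    using log_ratio_pos[OF C pb] r by (simp_all add: l_def ln_div)
  have "bn r n \<le> ln l" unfolding bn_def using ln_mono[OF L(2,1)] .
  then have bn_le: "bn r n \<le> \<delta> * \<epsilon> / 4 * l" using lnln by (simp add: l_def)
  have "l - 2 * ln (real (r n)) \<le> ln (real n * real (card D) / real (r n)^2)"
    using r d1 by (simp add: l_def ln_mult ln_div ln_realpow)
  then have lower: "\<delta> * (2 - \<epsilon> / 2) * l \<le> ln (real n * real (card D) / real (r n)^2) - bn r n"
    using r_le bn_le by (simp add: l_def algebra_simps)
  have "(1 - \<epsilon> / 2) * (2 - \<epsilon> / 2) * (\<delta> * l)
      \<le> (1 - \<epsilon> / 2) * (ln (real n * real (card D) / real (r n)^2) - bn r n)"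
    using mult_left_mono[OF lower, of "1 - \<epsilon> / 2"] eps_less_1 by (simp add: mult_ac)
  also note upper
  also have "(1 + rho n C) * \<delta> * (1 - \<epsilon>) * log_ratio n \<le> (2 + \<epsilon> / 2) * (1 - \<epsilon>) * (\<delta> * l)"
  proof -
    have "(1 + rho n C) * log_ratio n \<le> (2 + \<epsilon> / 2) * l"
      using rho L rho_gt_1[OF C] by (intro mult_mono) auto
    then have "\<delta> * (1 - \<epsilon>) * ((1 + rho n C) * log_ratio n) \<le> \<delta> * (1 - \<epsilon>) * ((2 + \<epsilon> / 2) * l)"
      using \<open>0 < \<delta>\<close> eps_less_1 by (intro mult_left_mono) auto
    then show ?thesis by (simp add: mult_ac)
  qed
  also have "\<dots> \<le> (1 - \<epsilon> / 2) * (2 - \<epsilon> / 2) * (\<delta> * l)"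
  proof (rule mult_right_mono)
    have "(1 - \<epsilon> / 2) * (2 - \<epsilon> / 2) - (2 + \<epsilon> / 2) * (1 - \<epsilon>) = 3 / 4 * \<epsilon>^2"
      by (simp add: power2_eq_square field_simps)
    then show "(2 + \<epsilon> / 2) * (1 - \<epsilon>) \<le> (1 - \<epsilon> / 2) * (2 - \<epsilon> / 2)"
      using zero_le_power2[of \<epsilon>] by linarith
    show "0 \<le> \<delta> * l" using \<open>0 < \<delta>\<close> l0 by simp
  qed
  finally show False by simp
qed

lemma assumption11_rho_close_to_one:
  assumes A: "assumption11 p r" and s: "0 < s" "s < 1"
  shows "eventually (\<lambda>n. \<forall>C. community n C \<longrightarrow> 0 < pbar p n C \<and> rho n C - 1 < s) sequentially"
proof -
  have iii: "\<forall>c>0. eventually (\<lambda>n. \<forall>C. community n C \<longrightarrow>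
      0 < pbar p n C \<and> 1 / pbar p n C * log_ratio n \<le> c * real (r n)) sequentially"
    using A unfolding assumption11_def by blast
  have "eventually (\<lambda>n. \<forall>C. community n C \<longrightarrow>
      0 < pbar p n C \<and> 1 / pbar p n C * log_ratio n \<le> s^2 / 12 * real (r n)) sequentially"
    by (rule iii[rule_format]) (use s in simp)
  then show ?thesis
  proof eventually_elim
    case (elim n)
    show ?case
    proof (intro allI impI conjI)
      fix C
      assume C: "community n C"
      with elim have pb: "0 < pbar p n C"
        and iii: "1 / pbar p n C * log_ratio n \<le> s^2 / 12 * real (r n)" by auto
      show "0 < pbar p n C" by (rule pb)
      have r0: "0 < real (r n)" using community_card_bounds(1)[OF C pb] by simp
      have "hfun (rho n C - 1) * (pbar p n C * real (r n)) \<le> 4 * log_ratio n"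
        by (rule hfun_rho_le[OF C pb])
      also have "\<dots> \<le> s^2 / 3 * (pbar p n C * real (r n))"
        using iii pb by (simp add: field_simps)
      finally have "hfun (rho n C - 1) \<le> s^2 / 3"
        using pb r0 by simp
      then show "rho n C - 1 < s"
        using less_if_hfun_le rho_gt_1[OF C] s by simp
    qed
  qed
qed

lemma ECset_ln_card_ratio_le:
  assumes C: "community n C" and pb: "0 < pbar p n C" and D: "D \<in> ECset \<epsilon> p r rho n C"
    and "0 < \<delta>" and "rho n C - 1 \<le> \<epsilon> / 2"
    and "ln (real (r n)) \<le> (1/2 - \<delta> + \<delta> * \<epsilon> / 8) * ln (real n)"
    and "ln (ln (real n)) \<le> \<delta> * \<epsilon> / 4 * ln (real n)"
    and sparse: "real (card D) < real (r n) / (real n / real (r n)) powr g \<Longrightarrow>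
      real (card D) * pbar p n D / (real (card C) * pbar p n C) \<le> \<delta>"
  shows "ln (real (r n) / real (card D)) \<le> g * log_ratio n"
proof (rule ln_div_le_of_div_powr_le)
  have r: "2 \<le> r n" "r n \<le> n" using community_card_bounds[OF C pb] by auto
  then show "0 < real (r n)" "0 < real n / real (r n)" by simp_all
  show "0 < real (card D)" using ECset_card_bounds(2)[OF C D] by simp
  have "\<delta> * real (r n) * pbar p n C < real (card D) * pbar p n D"
    using ECset_mass_fraction_gt[OF C pb D] assms(4-7) by blast
  then have "\<delta> < real (card D) * pbar p n D / (real (card C) * pbar p n C)"
    using C pb r by (simp add: pos_less_divide_eq)
  then show "real (r n) / (real n / real (r n)) powr g \<le> real (card D)"
    using sparse by force
qed

lemma ln_r_mult_max_ln_rho_le: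
  assumes C: "community n C" and pb: "0 < pbar p n C"
    and small_r: "4 * ln (real (r n)) \<le> \<eta> * log_ratio n"
    and small_pbar: "ln (1 / pbar p n C) * ln (real (r n)) \<le> \<eta> / 2 * log_ratio n"
    and small_L: "(ln (4 * log_ratio n))^2 \<le> 2 * \<eta> * log_ratio n"
  shows "ln (real (r n)) * max (ln (rho n C)) 1 \<le> \<eta> * log_ratio n"
proof (cases "ln (rho n C) \<le> 2")
  case True
  have lr0: "0 \<le> ln (real (r n))" using community_card_bounds(1)[OF C pb] by simp
  with True have "ln (real (r n)) * max (ln (rho n C)) 1 \<le> ln (real (r n)) * 2"
    by (intro mult_left_mono) auto
  then show ?thesis using lr0 small_r by linarith
next
  case False
  define x lr where "x = ln (4 * log_ratio n)" and "lr = ln (real (r n))"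
  have lr0: "0 \<le> lr" using community_card_bounds(1)[OF C pb] by (simp add: lr_def)
  have "ln (rho n C) \<le> x + ln (1 / pbar p n C) - lr"
    using ln_rho_le[OF C pb] False by (simp add: x_def lr_def)
  then have "lr * ln (rho n C) \<le> lr * (x + ln (1 / pbar p n C) - lr)"
    using lr0 by (rule mult_left_mono)
  also have "\<dots> = lr * (x - lr) + ln (1 / pbar p n C) * lr" by (simp add: algebra_simps)
  finally have "lr * ln (rho n C) \<le> lr * (x - lr) + ln (1 / pbar p n C) * lr" .
  moreover have "lr * (x - lr) \<le> x^2 / 4"
    using zero_le_power2[of "x - 2 * lr"] by (simp add: power2_eq_square algebra_simps)
  moreover have "max (ln (rho n C)) 1 = ln (rho n C)" using False by simp
  ultimately show ?thesis
    using small_pbar small_L by (simp add: x_def lr_def)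
qed

lemma assumption11_log_bounds:
  assumes "assumption11 p r" and "0 < \<eta>"
  shows "eventually (log_bounds \<eta>) sequentially"
proof -
  from assms(1) obtain \<delta> \<gamma> where \<delta>: "0 < \<delta>" "\<delta> < 1/2"
    and bigo: "(\<lambda>n. real (r n)) \<in> O(\<lambda>n. real n powr (1/2 - \<delta>))"
    and \<gamma>: "\<gamma> \<longlonglongrightarrow> 0"
    and ii: "\<forall>n. \<forall>C D. C \<subseteq> {1..n} \<and> card C = r n \<and> D \<subseteq> C \<and>
       real (card D) < real (r n) / (real n / real (r n)) powr (\<gamma> n) \<longrightarrow>
       real (card D) * pbar p n D / (real (card C) * pbar p n C) \<le> \<delta>"
    unfolding assumption11_def by blast
  \<comment> \<open>the slack \<open>\<delta> \<epsilon> / 8\<close> over the exponent of 1.1(i) is what \<open>ECset_mass_fraction_gt\<close> tolerates\<close>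
  define b where "b = 1/2 - \<delta> + \<delta> * \<epsilon> / 8"
  have "0 < \<delta> * \<epsilon>" using \<delta> eps_pos by simp
  then have b: "1/2 - \<delta> < b" "b \<le> 1/2" using \<delta> eps_less_1 by (auto simp: b_def)
  have "eventually (\<lambda>n. real (r n) \<le> real n powr b) sequentially"
    using eventually_le_powr_of_bigo[OF bigo b(1)] .
  moreover have "eventually (\<lambda>n. ln (ln (real n)) \<le> \<delta> * \<epsilon> / 4 * ln (real n)) sequentially"
    using \<open>0 < \<delta> * \<epsilon>\<close> by real_asymp
  moreover have "eventually (\<lambda>n. 2 / \<eta> \<le> ln (real n)) sequentially" by real_asymp
  moreover have "eventually (\<lambda>n. \<gamma> n < \<eta>) sequentially"
    using \<gamma> \<open>0 < \<eta>\<close> by (rule order_tendstoD)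
  moreover have "eventually (\<lambda>n. \<forall>C. community n C \<longrightarrow> 0 < pbar p n C \<and> rho n C - 1 < \<epsilon> / 2)
      sequentially"
    by (rule assumption11_rho_close_to_one[OF assms(1)]) (use eps_pos eps_less_1 in auto)
  ultimately show ?thesis
  proof eventually_elim
    case (elim n)
    show ?case unfolding log_bounds_def
    proof (intro allI impI conjI ballI)
      fix C
      assume C: "community n C"
      with elim(5) have pb: "0 < pbar p n C" and rho: "rho n C - 1 < \<epsilon> / 2" by auto
      have r: "1 \<le> real (r n)" "1 \<le> real n" using community_card_bounds[OF C pb] by auto
      note L = ln_bounds_of_le_powr[OF r elim(1) b(2)]
      have "2 \<le> \<eta> * ln (real n)" using elim(3) \<open>0 < \<eta>\<close> by (simp add: field_simps)
      moreover have "\<eta> * ln (real n) \<le> \<eta> * (2 * log_ratio n)"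
        using L(2) \<open>0 < \<eta>\<close> by (intro mult_left_mono) auto
      ultimately have "1 \<le> \<eta> * log_ratio n" by linarith
      moreover have ln_rho: "ln (rho n C) \<le> 1"
        using ln_le_minus_one[of "rho n C"] rho rho_gt_1[OF C] eps_less_1 by simp
      ultimately show "ln (rho n C) \<le> \<eta> * log_ratio n" by linarith
      fix D
      assume D: "D \<in> ECset \<epsilon> p r rho n C"
      have "ln (real (r n) / real (card D)) \<le> \<gamma> n * log_ratio n"
        using ECset_ln_card_ratio_le[OF C pb D \<delta>(1)] rho L(1) elim(2) ii C
          ECset_card_bounds(1)[OF C D] by (simp add: b_def)
      also have "\<dots> \<le> \<eta> * log_ratio n"
        using elim(4) log_ratio_pos[OF C pb] by (intro mult_right_mono) auto
      finally show "ln (real (r n) / real (card D)) * max (ln (rho n C)) 1 \<le> \<eta> * log_ratio n"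
        using ln_rho by simp
    qed
  qed
qed

lemma assumption12_weighted_log_bound:
  assumes "assumption12 p r" and "0 < \<eta>"
  shows "eventually (\<lambda>n. \<forall>C. community n C \<longrightarrow>
           2 \<le> r n \<and> ln (real (r n)) * max (ln (rho n C)) 1 \<le> \<eta> * log_ratio n) sequentially"
proof -
  define a where "a = min (1/2) (\<eta> / 8)"
  have a: "0 < a" "a \<le> 1/2" "8 * a \<le> \<eta>" using \<open>0 < \<eta>\<close> by (auto simp: a_def)
  have i: "\<forall>c>0. eventually (\<lambda>n. real (r n) \<le> real n powr c) sequentially"
    and ii: "\<forall>c>0. eventually (\<lambda>n. \<forall>C. community n C \<longrightarrow> 0 < pbar p n C \<and>
       ln (1 / pbar p n C) * ln (real (r n)) \<le> c * log_ratio n) sequentially"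
    using assms(1) unfolding assumption12_def by blast+
  have "eventually (\<lambda>n. real (r n) \<le> real n powr a) sequentially"
    using i a(1) by blast
  moreover have "eventually (\<lambda>n. \<forall>C. community n C \<longrightarrow> 0 < pbar p n C \<and>
       ln (1 / pbar p n C) * ln (real (r n)) \<le> \<eta> / 2 * log_ratio n) sequentially"
    by (rule ii[rule_format]) (use \<open>0 < \<eta>\<close> in simp)
  moreover have "eventually (\<lambda>n. 1 \<le> ln (real n)) sequentially" by real_asymp
  moreover have "eventually (\<lambda>n. (ln (4 * ln (real n)))^2 \<le> \<eta> * ln (real n)) sequentially"
    using \<open>0 < \<eta>\<close> by real_asymp
  ultimately show ?thesis
  proof eventually_elim
    case (elim n)
    show ?case
    proof (intro allI impI conjI)
      fix C
      assume C: "community n C"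
      with elim(2) have pb: "0 < pbar p n C"
        and small_pbar: "ln (1 / pbar p n C) * ln (real (r n)) \<le> \<eta> / 2 * log_ratio n" by auto
      show "2 \<le> r n" using community_card_bounds(1)[OF C pb] .
      have r: "1 \<le> real (r n)" "1 \<le> real n" using community_card_bounds[OF C pb] by auto
      note L = ln_bounds_of_le_powr[OF r elim(1) a(2)]
      have "4 * ln (real (r n)) \<le> 8 * a * log_ratio n"
        using L(1,2) mult_left_mono[OF L(2) less_imp_le[OF a(1)]] by linarith
      also have "\<dots> \<le> \<eta> * log_ratio n"
        using a(3) L(2) elim(3) by (intro mult_right_mono) auto
      finally have small_r: "4 * ln (real (r n)) \<le> \<eta> * log_ratio n" .
      have "0 \<le> ln (4 * log_ratio n)" using L(2) elim(3) by simp
      then have "(ln (4 * log_ratio n))^2 \<le> (ln (4 * ln (real n)))^2"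
        using L(2,3) elim(3) by (intro power_mono) auto
      also have "\<dots> \<le> \<eta> * (2 * log_ratio n)"
        using elim(4) L(2) mult_left_mono[OF L(2), of \<eta>] \<open>0 < \<eta>\<close> by linarith
      finally have "(ln (4 * log_ratio n))^2 \<le> 2 * \<eta> * log_ratio n" by simp
      then show "ln (real (r n)) * max (ln (rho n C)) 1 \<le> \<eta> * log_ratio n"
        by (rule ln_r_mult_max_ln_rho_le[OF C pb small_r small_pbar])
    qed
  qed
qed

lemma assumption12_log_bounds:
  assumes "assumption12 p r" and "0 < \<eta>"
  shows "eventually (log_bounds \<eta>) sequentially"
proof -
  have "eventually (\<lambda>n. \<forall>C. community n C \<longrightarrow>
    2 \<le> r n \<and> ln (real (r n)) * max (ln (rho n C)) 1 \<le> \<eta> * ln 2 * log_ratio n) sequentially"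
    by (rule assumption12_weighted_log_bound[OF assms(1)]) (use assms(2) in simp)
  then show ?thesis
  proof (rule eventually_mono)
    fix n
    assume bound: "\<forall>C. community n C \<longrightarrow>
      2 \<le> r n \<and> ln (real (r n)) * max (ln (rho n C)) 1 \<le> \<eta> * ln 2 * log_ratio n"
    show "log_bounds \<eta> n" unfolding log_bounds_def
    proof (intro allI impI conjI ballI)
      fix C
      assume C: "community n C"
      with bound have r2: "2 \<le> r n"
        and weighted: "ln (real (r n)) * max (ln (rho n C)) 1 \<le> \<eta> * ln 2 * log_ratio n" by auto
      have "ln 2 \<le> ln (real (r n))" using r2 by simp
      then have "ln 2 * max (ln (rho n C)) 1 \<le> ln (real (r n)) * max (ln (rho n C)) 1"
        by (intro mult_right_mono) auto
      also have "\<dots> \<le> ln 2 * (\<eta> * log_ratio n)" using weighted by (simp add: mult_ac)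
      finally have max_le: "max (ln (rho n C)) 1 \<le> \<eta> * log_ratio n" by simp
      then show "ln (rho n C) \<le> \<eta> * log_ratio n" by (rule order_trans[OF max.cobounded1])
      have L0: "0 \<le> \<eta> * log_ratio n" using max_le max.cobounded2[of 1 "ln (rho n C)"] by linarith
      fix D
      assume D: "D \<in> ECset \<epsilon> p r rho n C"
      have "ln (real (r n) / real (card D)) \<le> ln (real (r n))"
        using ECset_card_bounds(2)[OF C D] r2 by (simp add: ln_div)
      then have "ln (real (r n) / real (card D)) * max (ln (rho n C)) 1
          \<le> ln (real (r n)) * max (ln (rho n C)) 1"
        by (intro mult_right_mono) auto
      also have "\<dots> \<le> \<eta> * ln 2 * log_ratio n" by (rule weighted)
      also have "\<dots> \<le> \<eta> * log_ratio n"
        using L0 ln_2_less_1 mult_left_mono[of "ln 2" 1 "\<eta> * log_ratio n"] by (simp add: mult_ac)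
      finally show "ln (real (r n) / real (card D)) * max (ln (rho n C)) 1 \<le> \<eta> * log_ratio n" .
    qed
  qed
qed

lemma conclusion_of_log_bounds:
  assumes bounds: "\<And>\<eta>. 0 < \<eta> \<Longrightarrow> eventually (log_bounds \<eta>) sequentially"
  shows "(\<forall>\<eta>>0. eventually (\<lambda>n. \<forall>C. community n C \<longrightarrow>
             (\<forall>D\<in>ECset \<epsilon> p r rho n C.
                \<bar>ln (real (r n) / real (card D)) / log_ratio n * max (ln (rho n C)) 1\<bar> \<le> \<eta>))
           sequentially)
       \<and> (\<forall>M. eventually (\<lambda>n. \<forall>C. community n C \<longrightarrow> log_ratio n / ln (rho n C) \<ge> M) sequentially)"
proof (intro conjI allI impI)
  fix \<eta> :: real
  assume "0 < \<eta>"
  from bounds[OF this] show "eventually (\<lambda>n. \<forall>C. community n C \<longrightarrow>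
      (\<forall>D\<in>ECset \<epsilon> p r rho n C.
         \<bar>ln (real (r n) / real (card D)) / log_ratio n * max (ln (rho n C)) 1\<bar> \<le> \<eta>)) sequentially"
  proof eventually_elim
    case (elim n)
    show ?case
    proof (intro allI impI ballI)
      fix C D
      assume C: "community n C" and D: "D \<in> ECset \<epsilon> p r rho n C"
      with elim have rho: "ln (rho n C) \<le> \<eta> * log_ratio n"
        and DC: "ln (real (r n) / real (card D)) * max (ln (rho n C)) 1 \<le> \<eta> * log_ratio n"
        by (auto simp: log_bounds_def)
      have "0 < ln (rho n C)" using rho_gt_1[OF C] by simp
      with rho have "0 < \<eta> * log_ratio n" by linarith
      then have L0: "0 < log_ratio n" using \<open>0 < \<eta>\<close> by (simp add: zero_less_mult_iff)
      have "0 \<le> ln (real (r n) / real (card D))" using ECset_card_bounds(2,3)[OF C D] by simp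
      then show "\<bar>ln (real (r n) / real (card D)) / log_ratio n * max (ln (rho n C)) 1\<bar> \<le> \<eta>"
        using DC L0 by (simp add: pos_divide_le_eq)
    qed
  qed
next
  fix M :: real
  define \<eta> where "\<eta> = 1 / max M 1"
  have "0 < \<eta>" by (simp add: \<eta>_def)
  from bounds[OF this]
  show "eventually (\<lambda>n. \<forall>C. community n C \<longrightarrow> log_ratio n / ln (rho n C) \<ge> M) sequentially"
  proof eventually_elim
    case (elim n)
    show ?case
    proof (intro allI impI)
      fix C
      assume C: "community n C"
      with elim have "ln (rho n C) \<le> \<eta> * log_ratio n" by (simp add: log_bounds_def)
      then have "max M 1 * ln (rho n C) \<le> log_ratio n" by (simp add: \<eta>_def field_simps)
      moreover have "0 < ln (rho n C)" using rho_gt_1[OF C] by simp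
      ultimately have "max M 1 \<le> log_ratio n / ln (rho n C)" by (simp only: pos_le_divide_eq)
      then show "M \<le> log_ratio n / ln (rho n C)" by linarith
    qed
  qed
qed

end

theorem lemma6:
  fixes \<epsilon> :: real
    and p :: "nat \<Rightarrow> nat \<Rightarrow> nat \<Rightarrow> real"
    and r :: "nat \<Rightarrow> nat"
    and rho :: "nat \<Rightarrow> nat set \<Rightarrow> real"
  assumes eps: "0 < \<epsilon>" "\<epsilon> < 1"
    and set: "\<forall>n. setting p r rho n"
    and A2: "assumption2 p r rho"
    and A1: "assumption11 p r \<or> assumption12 p r"
    and hyp: "\<forall>n. \<forall>C. C \<subseteq> {1..n} \<and> card C = r n \<longrightarrow>
               (\<forall>D. D \<subseteq> C \<and> D \<noteq> {} \<longrightarrow>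
                  Ee p n D * hfun (rho n C - 1)
                    \<le> (1 - \<epsilon>) * (real (card D) * ln (real n / real (card D))))"
  shows "(\<forall>\<eta>>0. eventually (\<lambda>n. \<forall>C. C \<subseteq> {1..n} \<and> card C = r n \<longrightarrow>
             (\<forall>D\<in>ECset \<epsilon> p r rho n C.
                \<bar>ln (real (r n) / real (card D)) / ln (real n / real (r n))
                   * max (ln (rho n C)) 1\<bar> \<le> \<eta>)) sequentially)
       \<and> (\<forall>M. eventually (\<lambda>n. \<forall>C. C \<subseteq> {1..n} \<and> card C = r n \<longrightarrow>
             ln (real n / real (r n)) / ln (rho n C) \<ge> M) sequentially)"
proof -
  interpret subthreshold_model \<epsilon> p r rho
    using eps set hyp by unfold_locales blast+
  have "eventually (log_bounds \<eta>) sequentially" if "0 < \<eta>" for \<eta>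
    using A1 assumption11_log_bounds assumption12_log_bounds that by blast
  then show ?thesis by (rule conclusion_of_log_bounds)
qed

end
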